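(* Let $\mathfrak g$ be a real Lie algebra, $r\in\mathfrak g\otimes\mathfrak g$, and $\kappa\in\mathbb R$. Let $\alpha=(r-r^t)/2$ and $\beta=(r+r^t)/2$ (as linear maps $\mathfrak g^*\to\mathfrak g$), and suppose $\beta$ is invariant, i.e. $(\mathrm{ad}(x)\otimes\mathrm{id}+\mathrm{id}\otimes\mathrm{ad}(x))\beta=0$ for all $x\in\mathfrak g$. Then $r$ satisfies $[r_{12},r_{13}]+[r_{12},r_{23}]+[r_{13},r_{23}]=\frac{\kappa+1}{4}[r_{13}+r_{31},r_{23}+r_{32}]$ if and only if $[\alpha(a^* ),\alpha(b^* )]-\alpha(\mathrm{ad}^*(\alpha(a^* ))b^*-\mathrm{ad}^*(\alpha(b^* ))a^* )=\kappa[\beta(a^* ),\beta(b^* )]$ for all $a^*,b^*\in\mathfrak g^*$.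
   Context: $\mathfrak g$ is finite-dimensional. An element $r\in\mathfrak g\otimes\mathfrak g$ is identified with the linear map $r:\mathfrak g^*\to\mathfrak g$, $\langle r(a^* ),b^*\rangle=\langle a^*\otimes b^*,r\rangle$; $r^t$ is the map induced by $\sigma(r)$, where $\sigma(x\otimes y)=y\otimes x$. The coadjoint representation is $\langle\mathrm{ad}^*(x)a^*,y\rangle=-\langle a^*,[x,y]\rangle$. For $r=\sum_i a_i\otimes b_i$: $[r_{12},r_{13}]=\sum_{i,j}[a_i,a_j]\otimes b_i\otimes b_j$, $[r_{12},r_{23}]=\sum_{i,j}a_i\otimes[b_i,a_j]\otimes b_j$, $[r_{13},r_{23}]=\sum_{i,j}a_i\otimes a_j\otimes[b_i,b_j]$. Writing $s=r+\sigma(r)=\sum_k c_k\otimes d_k$, one has $r_{13}+r_{31}=s_{13}$, $r_{23}+r_{32}=s_{23}$, and $[r_{13}+r_{31},r_{23}+r_{32}]:=\sum_{k,l}c_k\otimes c_l\otimes[d_k,d_l]$. *)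

theory Defs
  imports "HOL-Analysis.Analysis"
begin

text \<open>A finite-dimensional real Lie algebra is modelled as
  real^'n (basis e_i = axis i 1) with a Lie bracket br. Its dual is modelled as
  real^'n via the dual basis. An element r of g (x) g is given by its coefficient
  matrix: r = sum_{i,j} r$i$j e_i (x) e_j. Elements of g (x) g (x) g are given by
  their coefficient functions T p q s (coefficient of e_p (x) e_q (x) e_s).\<close>

definition lie_algebra :: "(real^'n \<Rightarrow> real^'n \<Rightarrow> real^'n) \<Rightarrow> bool" where
  "lie_algebra br \<longleftrightarrow> bilinear br \<and> (\<forall>x y. br x y = - br y x)
     \<and> (\<forall>x y z. br x (br y z) + br y (br z x) + br z (br x y) = 0)"

definition ebas :: "'n::finite \<Rightarrow> real^'n" where
  "ebas i = axis i 1"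

definition sc :: "(real^'n \<Rightarrow> real^'n \<Rightarrow> real^'n) \<Rightarrow> 'n \<Rightarrow> 'n \<Rightarrow> 'n \<Rightarrow> real" where
  "sc br i j p = (br (ebas i) (ebas j)) $ p"

definition flip :: "real^'n^'n \<Rightarrow> real^'n^'n" where
  "flip r = transpose r"

text \<open>[r12, r13] = sum [a_i,a_j] (x) b_i (x) b_j\<close>
definition br12_13 :: "(real^'n \<Rightarrow> real^'n \<Rightarrow> real^'n) \<Rightarrow> real^'n^'n \<Rightarrow> 'n \<Rightarrow> 'n \<Rightarrow> 'n \<Rightarrow> real" where
  "br12_13 br r p q s = (\<Sum>i\<in>UNIV. \<Sum>j\<in>UNIV. r$i$q * r$j$s * sc br i j p)"

text \<open>[r12, r23] = sum a_i (x) [b_i,a_j] (x) b_j\<close>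
definition br12_23 :: "(real^'n \<Rightarrow> real^'n \<Rightarrow> real^'n) \<Rightarrow> real^'n^'n \<Rightarrow> 'n \<Rightarrow> 'n \<Rightarrow> 'n \<Rightarrow> real" where
  "br12_23 br r p q s = (\<Sum>k\<in>UNIV. \<Sum>j\<in>UNIV. r$p$k * r$j$s * sc br k j q)"

text \<open>[r13, r23] = sum a_i (x) a_j (x) [b_i,b_j]; applied to s = r + sigma(r) this is
  [r13 + r31, r23 + r32]\<close>
definition br13_23 :: "(real^'n \<Rightarrow> real^'n \<Rightarrow> real^'n) \<Rightarrow> real^'n^'n \<Rightarrow> 'n \<Rightarrow> 'n \<Rightarrow> 'n \<Rightarrow> real" where
  "br13_23 br r p q s = (\<Sum>k\<in>UNIV. \<Sum>l\<in>UNIV. r$p$k * r$q$l * sc br k l s)"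

text \<open>r as a linear map g* -> g:  <r(a), b> = <a (x) b, r> = sum r_ij a_i b_j\<close>
definition tmap :: "real^'n^'n \<Rightarrow> real^'n \<Rightarrow> real^'n" where
  "tmap r a = (\<chi> j. \<Sum>i\<in>UNIV. a$i * r$i$j)"

definition alpha_map :: "real^'n^'n \<Rightarrow> real^'n \<Rightarrow> real^'n" where
  "alpha_map r a = (1/2) *\<^sub>R (tmap r a - tmap (flip r) a)"

definition beta_map :: "real^'n^'n \<Rightarrow> real^'n \<Rightarrow> real^'n" where
  "beta_map r a = (1/2) *\<^sub>R (tmap r a + tmap (flip r) a)"

text \<open>coadjoint action: <ad*(x) a, y> = - <a, [x,y]>\<close>
definition coad :: "(real^'n \<Rightarrow> real^'n \<Rightarrow> real^'n) \<Rightarrow> real^'n \<Rightarrow> real^'n \<Rightarrow> real^'n" where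
  "coad br x a = (\<chi> j. - (\<Sum>p\<in>UNIV. a$p * (br x (ebas j))$p))"

text \<open>beta as tensor: (r + sigma(r))/2. Invariance:
  (ad(x) (x) id + id (x) ad(x)) beta = 0 for all x, in coordinates.\<close>
definition beta_tensor :: "real^'n^'n \<Rightarrow> real^'n^'n" where
  "beta_tensor r = (1/2) *\<^sub>R (r + flip r)"

definition invariant_tensor :: "(real^'n \<Rightarrow> real^'n \<Rightarrow> real^'n) \<Rightarrow> real^'n^'n \<Rightarrow> bool" where
  "invariant_tensor br t \<longleftrightarrow> (\<forall>x p q.
     (\<Sum>i\<in>UNIV. t$i$q * (br x (ebas i))$p) + (\<Sum>j\<in>UNIV. t$p$j * (br x (ebas j))$q) = 0)"

end

theory Submission
  imports Defs
begin

text \<open>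
  Split r = A + B into its antisymmetric part A (the tensor of alpha) and its
  symmetric part B (the tensor of beta). Every bracket [r12,r13], [r12,r23], [r13,r23] is
  bilinear in the two copies of r, so it splits into four mixed brackets. Invariance of B makes
  all mixed terms containing B cancel, except [B13,B23]; and [r13+r31, r23+r32] = 4 [B13,B23].
  Hence the difference of the two sides of the tensor equation is
  [A12,A13] + [A12,A23] + [A13,A23] - kappa [B13,B23].
  On the operator side, evaluating the bilinear defect
    D(a,b) = [alpha a, alpha b] - alpha(ad*(alpha a) b - ad*(alpha b) a) - kappa [beta a, beta b]
  at a pair of dual basis vectors gives exactly these coordinates. So the tensor equation
  says that D vanishes on basis vectors, which for a bilinear map means D = 0.
  The file develops coordinates, the mixed brackets and their cancellations, the defect,
  and finally the equivalence.
\<close>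

lemma ebas_delta:
  "x * ebas j $ k = (if k = j then x else 0)" "ebas j $ k * x = (if k = j then x else 0)"
  "(if k = j then x else 0) * y = (if k = j then x * y else (0::real))"
  by (simp_all add: ebas_def axis_def)

lemma br_coord:
  assumes "bilinear br"
  shows "br x y $ t = (\<Sum>i\<in>UNIV. \<Sum>j\<in>UNIV. x$i * y$j * sc br i j t)"
proof -
  have expand: "z = (\<Sum>i\<in>UNIV. z$i *\<^sub>R ebas i)" for z :: "real^'a"
    using basis_expansion[of z] by (simp add: scalar_mult_eq_scaleR ebas_def)
  have lin_l: "linear (\<lambda>x. br x y)" and lin_r: "linear (\<lambda>y. br x y)" for x y
    using assms by (simp_all add: bilinear_def)
  have "br x y = br (\<Sum>i\<in>UNIV. x$i *\<^sub>R ebas i) (\<Sum>j\<in>UNIV. y$j *\<^sub>R ebas j)"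
    using expand[of x] expand[of y] by simp
  also have "\<dots> = (\<Sum>i\<in>UNIV. \<Sum>j\<in>UNIV. (x$i * y$j) *\<^sub>R br (ebas i) (ebas j))"
    by (simp add: linear_sum[OF lin_l] linear_sum[OF lin_r] bilinear_lmul[OF assms]
        bilinear_rmul[OF assms] scaleR_sum_right)
      (subst sum.swap, simp add: mult.commute)
  finally show ?thesis by (simp add: sc_def)
qed

lemma sc_antisym:
  assumes "\<And>x y. br x y = - br y x"
  shows "sc br i j k = - sc br j i k"
  unfolding sc_def by (subst assms) simp

lemma br_ebas_coord:
  assumes "bilinear br"
  shows "br x (ebas j) $ t = (\<Sum>i\<in>UNIV. x$i * sc br i j t)"
  by (simp add: br_coord[OF assms] ebas_delta)

lemma coad_ebas: "coad br x (ebas q) $ j = - br x (ebas j) $ q"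
  by (simp add: coad_def ebas_delta)

definition alpha_tensor :: "real^'n^'n \<Rightarrow> real^'n^'n" where
  "alpha_tensor r = (1/2) *\<^sub>R (r - flip r)"

lemma tensor_split: "r = alpha_tensor r + beta_tensor r"
  by (simp add: alpha_tensor_def beta_tensor_def algebra_simps flip: scaleR_2)

lemma flip_alpha_tensor: "flip (alpha_tensor r) = - alpha_tensor r"
  by (simp add: alpha_tensor_def flip_def vec_eq_iff transpose_def field_simps)

lemma symmetrization: "r + flip r = 2 *\<^sub>R beta_tensor r"
  by (simp add: beta_tensor_def)

lemma tmap_linear: "linear (tmap f)"
  by (auto simp: linear_iff tmap_def vec_eq_iff sum.distrib algebra_simps sum_distrib_left)

lemma tmap_ebas: "tmap f (ebas p) = f $ p"
  by (simp add: tmap_def vec_eq_iff ebas_delta)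

lemma alpha_map_tmap: "alpha_map r = tmap (alpha_tensor r)"
  by (auto simp: alpha_map_def alpha_tensor_def tmap_def flip_def vec_eq_iff algebra_simps
      sum_subtractf[symmetric] sum_distrib_left)

lemma beta_map_tmap: "beta_map r = tmap (beta_tensor r)"
  by (auto simp: beta_map_def beta_tensor_def tmap_def flip_def vec_eq_iff algebra_simps
      sum.distrib[symmetric] sum_distrib_left)

section \<open>Mixed brackets of two tensors\<close>

definition bracket12_13 ::
    "(real^'n \<Rightarrow> real^'n \<Rightarrow> real^'n) \<Rightarrow> real^'n^'n \<Rightarrow> real^'n^'n \<Rightarrow> 'n \<Rightarrow> 'n \<Rightarrow> 'n \<Rightarrow> real" where
  "bracket12_13 br f g p q s = (\<Sum>i\<in>UNIV. \<Sum>j\<in>UNIV. f$i$q * g$j$s * sc br i j p)"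

definition bracket12_23 ::
    "(real^'n \<Rightarrow> real^'n \<Rightarrow> real^'n) \<Rightarrow> real^'n^'n \<Rightarrow> real^'n^'n \<Rightarrow> 'n \<Rightarrow> 'n \<Rightarrow> 'n \<Rightarrow> real" where
  "bracket12_23 br f g p q s = (\<Sum>k\<in>UNIV. \<Sum>j\<in>UNIV. f$p$k * g$j$s * sc br k j q)"

definition bracket13_23 ::
    "(real^'n \<Rightarrow> real^'n \<Rightarrow> real^'n) \<Rightarrow> real^'n^'n \<Rightarrow> real^'n^'n \<Rightarrow> 'n \<Rightarrow> 'n \<Rightarrow> 'n \<Rightarrow> real" where
  "bracket13_23 br f g p q s = (\<Sum>k\<in>UNIV. \<Sum>l\<in>UNIV. f$p$k * g$q$l * sc br k l s)"

lemma diagonal_brackets: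
  "br12_13 br r = bracket12_13 br r r" "br12_23 br r = bracket12_23 br r r"
  "br13_23 br r = bracket13_23 br r r"
  by (simp_all add: fun_eq_iff br12_13_def br12_23_def br13_23_def
      bracket12_13_def bracket12_23_def bracket13_23_def)

lemma brackets_add:
  "bracket12_13 br (f + f') g p q s = bracket12_13 br f g p q s + bracket12_13 br f' g p q s"
  "bracket12_13 br f (g + g') p q s = bracket12_13 br f g p q s + bracket12_13 br f g' p q s"
  "bracket12_23 br (f + f') g p q s = bracket12_23 br f g p q s + bracket12_23 br f' g p q s"
  "bracket12_23 br f (g + g') p q s = bracket12_23 br f g p q s + bracket12_23 br f g' p q s"
  "bracket13_23 br (f + f') g p q s = bracket13_23 br f g p q s + bracket13_23 br f' g p q s"
  "bracket13_23 br f (g + g') p q s = bracket13_23 br f g p q s + bracket13_23 br f g' p q s"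
  by (simp_all add: bracket12_13_def bracket12_23_def bracket13_23_def algebra_simps sum.distrib)

lemma bracket13_23_scale:
  "bracket13_23 br (c *\<^sub>R f) (c *\<^sub>R g) p q s = c * c * bracket13_23 br f g p q s"
  by (simp add: bracket13_23_def sum_distrib_left algebra_simps)

lemma bracket13_23_rows:
  assumes "bilinear br"
  shows "bracket13_23 br f g p q s = br (f$p) (g$q) $ s"
  by (simp add: bracket13_23_def br_coord[OF assms])

lemma flip_component: "flip f $ i $ j = f $ j $ i"
  by (simp add: flip_def transpose_def)

lemma bracket12_23_antisym:
  assumes "flip f = - f"
  shows "bracket12_23 br f g q p s = - bracket12_13 br f g p q s"
proof -
  have "f$q$k = - f$k$q" for k
    using flip_component[of f k q] by (simp add: assms)
  then show ?thesis
    by (simp add: bracket12_13_def bracket12_23_def sum_negf[symmetric])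
qed

section \<open>Consequences of the invariance of the symmetric part\<close>

lemma invariant_tensor_sc:
  assumes "invariant_tensor br B"
  shows "(\<Sum>i\<in>UNIV. B$i$q * sc br k i p) + (\<Sum>j\<in>UNIV. B$p$j * sc br k j q) = 0"
  using assms[unfolded invariant_tensor_def, rule_format, where x = "ebas k"]
  by (simp add: sc_def)

lemma invariant_first_leg_cancel:
  assumes antisym: "\<And>x y. br x y = - br y x" and inv: "invariant_tensor br B"
  shows "bracket12_13 br B g p q s + bracket12_23 br B g p q s = 0"
proof -
  have first: "bracket12_13 br B g p q s = (\<Sum>j\<in>UNIV. g$j$s * (\<Sum>i\<in>UNIV. B$i$q * sc br i j p))"
    unfolding bracket12_13_def sum_distrib_left by (subst sum.swap) (simp add: mult_ac)
  have second: "bracket12_23 br B g p q s = (\<Sum>j\<in>UNIV. g$j$s * (\<Sum>k\<in>UNIV. B$p$k * sc br k j q))"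
    unfolding bracket12_23_def sum_distrib_left by (subst sum.swap) (simp add: mult_ac)
  have vanish: "(\<Sum>i\<in>UNIV. B$i$q * sc br i j p) + (\<Sum>k\<in>UNIV. B$p$k * sc br k j q) = 0" for j
    using invariant_tensor_sc[OF inv, of q j p]
    by (simp add: sc_antisym[where br = br, OF antisym, of _ j] sum_negf)
  have "bracket12_13 br B g p q s + bracket12_23 br B g p q s
      = (\<Sum>j\<in>UNIV. g$j$s * ((\<Sum>i\<in>UNIV. B$i$q * sc br i j p) + (\<Sum>k\<in>UNIV. B$p$k * sc br k j q)))"
    by (simp add: first second distrib_left sum.distrib)
  then show ?thesis
    by (simp add: vanish)
qed

lemma cross_terms_cancel_12_13:
  assumes antisym: "\<And>x y. br x y = - br y x" and inv: "invariant_tensor br B"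
    and A: "flip A = - A"
  shows "bracket12_13 br A B p q s + bracket13_23 br B A p q s = 0"
proof -
  have A_antisym: "A$i$j = - A$j$i" for i j
    using flip_component[of A j i] by (simp add: A)
  have inner: "(\<Sum>j\<in>UNIV. B$j$s * sc br i j p) = - (\<Sum>l\<in>UNIV. B$p$l * sc br i l s)" for i
    using invariant_tensor_sc[OF inv, of s i p] by (simp add: eq_neg_iff_add_eq_0)
  have "bracket12_13 br A B p q s = (\<Sum>i\<in>UNIV. A$i$q * (\<Sum>j\<in>UNIV. B$j$s * sc br i j p))"
    unfolding bracket12_13_def sum_distrib_left by (simp add: mult_ac)
  also have "\<dots> = - (\<Sum>i\<in>UNIV. A$i$q * (\<Sum>l\<in>UNIV. B$p$l * sc br i l s))"
    by (simp add: inner sum_negf)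
  finally have first: "bracket12_13 br A B p q s = \<dots>" .
  have "bracket13_23 br B A p q s = (\<Sum>l\<in>UNIV. A$q$l * (\<Sum>k\<in>UNIV. B$p$k * sc br k l s))"
    unfolding bracket13_23_def sum_distrib_left by (subst sum.swap) (simp add: mult_ac)
  also have "\<dots> = (\<Sum>i\<in>UNIV. A$i$q * (\<Sum>l\<in>UNIV. B$p$l * sc br i l s))"
  proof -
    have "(\<Sum>k\<in>UNIV. B$p$k * sc br k l s) = - (\<Sum>k\<in>UNIV. B$p$k * sc br l k s)" for l
      unfolding sum_negf[symmetric] using sc_antisym[where br = br, OF antisym, of _ l s] by simp
    then show ?thesis
      by (simp add: A_antisym[of q])
  qed
  finally show ?thesis using first by simp
qed

lemma cross_terms_cancel_12_23:
  assumes inv: "invariant_tensor br B"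
  shows "bracket12_23 br A B p q s + bracket13_23 br A B p q s = 0"
proof -
  have "bracket12_23 br A B p q s + bracket13_23 br A B p q s
      = (\<Sum>k\<in>UNIV. A$p$k * ((\<Sum>j\<in>UNIV. B$j$s * sc br k j q) + (\<Sum>l\<in>UNIV. B$q$l * sc br k l s)))"
    by (simp add: bracket12_23_def bracket13_23_def sum_distrib_left distrib_left
        sum.distrib mult_ac)
  also have "\<dots> = 0"
    using invariant_tensor_sc[OF inv] by simp
  finally show ?thesis .
qed

lemma cybe_reduction:
  assumes antisym: "\<And>x y. br x y = - br y x" and inv: "invariant_tensor br B"
    and A: "flip A = - A"
  shows "bracket12_13 br (A + B) (A + B) p q s + bracket12_23 br (A + B) (A + B) p q s
           + bracket13_23 br (A + B) (A + B) p q s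
       = bracket12_13 br A A p q s + bracket12_23 br A A p q s + bracket13_23 br A A p q s
           + bracket13_23 br B B p q s"
  using invariant_first_leg_cancel[where br = br, OF antisym inv, of A p q s]
    invariant_first_leg_cancel[where br = br, OF antisym inv, of B p q s]
    cross_terms_cancel_12_13[where br = br, OF antisym inv A, of p q s]
    cross_terms_cancel_12_23[OF inv, of A p q s]
  unfolding brackets_add by linarith

section \<open>The operator side\<close>

definition defect ::
    "(real^'n \<Rightarrow> real^'n \<Rightarrow> real^'n) \<Rightarrow> real^'n^'n \<Rightarrow> real \<Rightarrow> real^'n \<Rightarrow> real^'n \<Rightarrow> real^'n" where
  "defect br r \<kappa> a b = br (alpha_map r a) (alpha_map r b)
     - alpha_map r (coad br (alpha_map r a) b - coad br (alpha_map r b) a)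
     - \<kappa> *\<^sub>R br (beta_map r a) (beta_map r b)"

lemma coad_bilinear:
  assumes bil: "bilinear br"
  shows "coad br (x + y) a = coad br x a + coad br y a" "coad br (c *\<^sub>R x) a = c *\<^sub>R coad br x a"
    "coad br x (a + b) = coad br x a + coad br x b" "coad br x (c *\<^sub>R a) = c *\<^sub>R coad br x a"
  by (auto simp: coad_def vec_eq_iff bilinear_ladd[OF bil] bilinear_lmul[OF bil]
      sum.distrib algebra_simps sum_distrib_left)

lemma defect_bilinear:
  fixes r :: "real^'n^'n"
  assumes bil: "bilinear br"
  shows "bilinear (defect br r \<kappa>)"
proof -
  have alpha_lin: "linear (alpha_map r)" and beta_lin: "linear (beta_map r)"
    by (simp_all add: alpha_map_tmap beta_map_tmap tmap_linear)
  note alpha = linear_add[OF alpha_lin] linear_cmul[OF alpha_lin] linear_diff[OF alpha_lin]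
  note beta = linear_add[OF beta_lin] linear_cmul[OF beta_lin]
  note bracket = bilinear_ladd[OF bil] bilinear_radd[OF bil] bilinear_lmul[OF bil] bilinear_rmul[OF bil]
  show ?thesis
    unfolding bilinear_def linear_iff defect_def
    by (simp add: alpha beta bracket coad_bilinear[OF bil] algebra_simps)
qed

lemma tmap_coad_row:
  assumes "bilinear br"
  shows "tmap f (coad br (f$p) (ebas q)) $ s = - bracket12_23 br f f p q s"
proof -
  have "tmap f (coad br (f$p) (ebas q)) $ s
      = - (\<Sum>j\<in>UNIV. \<Sum>k\<in>UNIV. f$p$k * f$j$s * sc br k j q)"
    by (simp add: tmap_def coad_ebas br_ebas_coord[OF assms] sum_distrib_left sum_negf
        mult_ac)
  then show ?thesis
    unfolding bracket12_23_def by (subst sum.swap) simp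
qed

lemma defect_basis:
  fixes r :: "real^'n^'n"
  assumes bil: "bilinear br"
  defines "A \<equiv> alpha_tensor r" and "B \<equiv> beta_tensor r"
  shows "defect br r \<kappa> (ebas p) (ebas q) $ s
       = bracket12_13 br A A p q s + bracket12_23 br A A p q s + bracket13_23 br A A p q s
         - \<kappa> * bracket13_23 br B B p q s"
proof -
  have "alpha_map r (coad br (alpha_map r (ebas p)) (ebas q)
          - coad br (alpha_map r (ebas q)) (ebas p)) $ s
      = tmap A (coad br (A$p) (ebas q)) $ s - tmap A (coad br (A$q) (ebas p)) $ s"
    by (simp add: A_def alpha_map_tmap tmap_ebas linear_diff[OF tmap_linear])
  also have "\<dots> = - bracket12_23 br A A p q s - bracket12_13 br A A p q s"
    using bracket12_23_antisym[OF flip_alpha_tensor, where br = br and g = A and q = q and p = p]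
    by (simp add: tmap_coad_row[OF bil] A_def)
  finally show ?thesis
    by (simp add: defect_def alpha_map_tmap beta_map_tmap tmap_ebas
        bracket13_23_rows[OF bil] A_def B_def)
qed

lemma tensor_equation_defect:
  assumes bil: "bilinear br" and antisym: "\<And>x y. br x y = - br y x"
    and inv: "invariant_tensor br (beta_tensor r)"
  shows "br12_13 br r p q s + br12_23 br r p q s + br13_23 br r p q s
           - (\<kappa> + 1) / 4 * br13_23 br (r + flip r) p q s
       = defect br r \<kappa> (ebas p) (ebas q) $ s"
proof -
  have "br12_13 br r p q s + br12_23 br r p q s + br13_23 br r p q s
      = bracket12_13 br (alpha_tensor r) (alpha_tensor r) p q s
        + bracket12_23 br (alpha_tensor r) (alpha_tensor r) p q s
        + bracket13_23 br (alpha_tensor r) (alpha_tensor r) p q s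
        + bracket13_23 br (beta_tensor r) (beta_tensor r) p q s"
    using cybe_reduction[where br = br, OF antisym inv flip_alpha_tensor[of r]]
    by (simp add: diagonal_brackets flip: tensor_split)
  moreover have "br13_23 br (r + flip r) p q s = 4 * bracket13_23 br (beta_tensor r) (beta_tensor r) p q s"
    by (simp add: diagonal_brackets symmetrization bracket13_23_scale)
  ultimately show ?thesis
    by (simp add: defect_basis[OF bil] algebra_simps)
qed

lemma bilinear_vanishes_on_basis:
  fixes h :: "real^'n \<Rightarrow> real^'n \<Rightarrow> real^'m"
  assumes "bilinear h" and "\<And>p q. h (ebas p) (ebas q) = 0"
  shows "h a b = 0"
proof -
  have "h = (\<lambda>a b. 0)"
  proof (rule bilinear_eq_stdbasis[OF assms(1)])
    show "bilinear (\<lambda>(a::real^'n) (b::real^'n). 0::real^'m)"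
      by (simp add: bilinear_def linear_zero)
    fix i j :: "real^'n"
    assume "i \<in> Basis" "j \<in> Basis"
    then show "h i j = 0"
      using assms(2) by (auto simp: Basis_vec_def ebas_def)
  qed
  then show ?thesis by simp
qed

theorem theorem3p9:
  fixes br :: "real^'n \<Rightarrow> real^'n \<Rightarrow> real^'n"
    and r :: "real^'n^'n"
    and \<kappa> :: real
  assumes "lie_algebra br"
    and "invariant_tensor br (beta_tensor r)"
  shows "(\<forall>p q s. br12_13 br r p q s + br12_23 br r p q s + br13_23 br r p q s
              = (\<kappa> + 1) / 4 * br13_23 br (r + flip r) p q s)
     \<longleftrightarrow> (\<forall>a b. br (alpha_map r a) (alpha_map r b)
              - alpha_map r (coad br (alpha_map r a) b - coad br (alpha_map r b) a)
              = \<kappa> *\<^sub>R br (beta_map r a) (beta_map r b))"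
proof -
  have bil: "bilinear br" and antisym: "\<And>x y. br x y = - br y x"
    using assms(1) unfolding lie_algebra_def by blast+
  have pointwise: "br12_13 br r p q s + br12_23 br r p q s + br13_23 br r p q s
              = (\<kappa> + 1) / 4 * br13_23 br (r + flip r) p q s
      \<longleftrightarrow> defect br r \<kappa> (ebas p) (ebas q) $ s = 0" for p q s
    using tensor_equation_defect[OF bil antisym assms(2), where p = p and q = q and s = s and \<kappa> = \<kappa>]
    by linarith
  have "(\<forall>p q s. br12_13 br r p q s + br12_23 br r p q s + br13_23 br r p q s
              = (\<kappa> + 1) / 4 * br13_23 br (r + flip r) p q s)
      \<longleftrightarrow> (\<forall>p q. defect br r \<kappa> (ebas p) (ebas q) = 0)"
    unfolding pointwise by (simp add: vec_eq_iff)
  also have "\<dots> \<longleftrightarrow> (\<forall>a b. defect br r \<kappa> a b = 0)"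
    using bilinear_vanishes_on_basis[OF defect_bilinear[OF bil]] by blast
  finally show ?thesis
    by (simp add: defect_def)
qed

end
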